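(* Let $\ell,n_1,\dots,n_\ell$ be positive integers and $K_1,\dots,K_\ell$ finite fields, and let $\mathcal{P}(\mathbf{K}^{\mathbf{n}})=\mathcal{P}(K_1^{n_1})\times\cdots\times\mathcal{P}(K_\ell^{n_\ell})$. Let $\rho:\mathcal{P}(\mathbf{K}^{\mathbf{n}})\to\mathbb{Z}_{\geq 0}$ be a rank function, i.e. for all $\mathcal{L},\mathcal{L}'$: (R1) $0\le\rho(\mathcal{L})\le\mathrm{Rk}(\mathcal{L})$; (R2) $\mathcal{L}\subseteq\mathcal{L}'$ implies $\rho(\mathcal{L})\le\rho(\mathcal{L}')$; (R3) $\rho(\mathcal{L}+\mathcal{L}')+\rho(\mathcal{L}\cap\mathcal{L}')\le\rho(\mathcal{L})+\rho(\mathcal{L}')$. Define $\rho^*(\mathcal{L})=\rho(\mathcal{L}^\perp)+\mathrm{Rk}(\mathcal{L})-\rho(\mathbf{K}^{\mathbf{n}})$. Then $\rho^*$ is also a rank function on $\mathcal{P}(\mathbf{K}^{\mathbf{n}})$, i.e. it satisfies (R1), (R2), (R3).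
   Context: $\mathcal{P}(K_i^{n_i})$ denotes the lattice of $K_i$-linear subspaces of $K_i^{n_i}$. Elements of $\mathcal{P}(\mathbf{K}^{\mathbf{n}})$ are tuples $\mathcal{L}=(\mathcal{L}_1,\dots,\mathcal{L}_\ell)$; inclusion $\subseteq$, sum $+$, intersection $\cap$ and orthogonal complement $\mathcal{L}^\perp=(\mathcal{L}_1^\perp,\dots,\mathcal{L}_\ell^\perp)$ are taken componentwise, where $\mathcal{L}_i^\perp$ is the orthogonal complement in $K_i^{n_i}$ with respect to the standard bilinear form. $\mathrm{Rk}(\mathcal{L})=\sum_{i=1}^\ell\dim_{K_i}\mathcal{L}_i$, and $\mathbf{K}^{\mathbf{n}}=(K_1^{n_1},\dots,K_\ell^{n_\ell})$ is the top element. *)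

theory Defs
  imports "HOL-Algebra.Ring"
begin

text \<open>Vectors of K^n are represented as functions nat => 'a whose entries at
positions j < n lie in the carrier of K and whose entries at positions j >= n
are the zero of K (canonical representation).\<close>

definition vecs :: "('a, 'b) ring_scheme \<Rightarrow> nat \<Rightarrow> (nat \<Rightarrow> 'a) set" where
  "vecs K n = {v. (\<forall>j<n. v j \<in> carrier K) \<and> (\<forall>j. n \<le> j \<longrightarrow> v j = \<zero>\<^bsub>K\<^esub>)}"

definition vzero :: "('a, 'b) ring_scheme \<Rightarrow> nat \<Rightarrow> 'a" where
  "vzero K = (\<lambda>j. \<zero>\<^bsub>K\<^esub>)"

definition vadd :: "('a, 'b) ring_scheme \<Rightarrow> (nat \<Rightarrow> 'a) \<Rightarrow> (nat \<Rightarrow> 'a) \<Rightarrow> nat \<Rightarrow> 'a" where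
  "vadd K v w = (\<lambda>j. v j \<oplus>\<^bsub>K\<^esub> w j)"

definition vsmult :: "('a, 'b) ring_scheme \<Rightarrow> 'a \<Rightarrow> (nat \<Rightarrow> 'a) \<Rightarrow> nat \<Rightarrow> 'a" where
  "vsmult K c v = (\<lambda>j. c \<otimes>\<^bsub>K\<^esub> v j)"

definition subspace :: "('a, 'b) ring_scheme \<Rightarrow> nat \<Rightarrow> (nat \<Rightarrow> 'a) set \<Rightarrow> bool" where
  "subspace K n L \<longleftrightarrow> L \<subseteq> vecs K n \<and> vzero K \<in> L \<and>
     (\<forall>v\<in>L. \<forall>w\<in>L. vadd K v w \<in> L) \<and>
     (\<forall>c\<in>carrier K. \<forall>v\<in>L. vsmult K c v \<in> L)"

definition lincomb :: "('a, 'b) ring_scheme \<Rightarrow> ((nat \<Rightarrow> 'a) \<Rightarrow> 'a) \<Rightarrow> (nat \<Rightarrow> 'a) set \<Rightarrow> nat \<Rightarrow> 'a" where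
  "lincomb K c B = (\<lambda>j. finsum K (\<lambda>b. c b \<otimes>\<^bsub>K\<^esub> b j) B)"

definition span :: "('a, 'b) ring_scheme \<Rightarrow> (nat \<Rightarrow> 'a) set \<Rightarrow> (nat \<Rightarrow> 'a) set" where
  "span K B = {lincomb K c B | c. c \<in> B \<rightarrow> carrier K}"

definition lin_indep :: "('a, 'b) ring_scheme \<Rightarrow> (nat \<Rightarrow> 'a) set \<Rightarrow> bool" where
  "lin_indep K B \<longleftrightarrow> finite B \<and>
     (\<forall>c. c \<in> B \<rightarrow> carrier K \<longrightarrow> lincomb K c B = vzero K \<longrightarrow> (\<forall>b\<in>B. c b = \<zero>\<^bsub>K\<^esub>))"

definition is_basis :: "('a, 'b) ring_scheme \<Rightarrow> (nat \<Rightarrow> 'a) set \<Rightarrow> (nat \<Rightarrow> 'a) set \<Rightarrow> bool" where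
  "is_basis K L B \<longleftrightarrow> B \<subseteq> L \<and> lin_indep K B \<and> span K B = L"

definition vdim :: "('a, 'b) ring_scheme \<Rightarrow> (nat \<Rightarrow> 'a) set \<Rightarrow> nat" where
  "vdim K L = (SOME d. \<exists>B. is_basis K L B \<and> card B = d)"

definition perp :: "('a, 'b) ring_scheme \<Rightarrow> nat \<Rightarrow> (nat \<Rightarrow> 'a) set \<Rightarrow> (nat \<Rightarrow> 'a) set" where
  "perp K n L = {w \<in> vecs K n. \<forall>v\<in>L. finsum K (\<lambda>j. v j \<otimes>\<^bsub>K\<^esub> w j) {..<n} = \<zero>\<^bsub>K\<^esub>}"

text \<open>The product lattice P(K^n) = P(K_1^{n_1}) x ... x P(K_l^{n_l}); tuples are
functions on indices i < l (components at i >= l are fixed to be empty).\<close>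

definition PL :: "nat \<Rightarrow> (nat \<Rightarrow> ('a, 'b) ring_scheme) \<Rightarrow> (nat \<Rightarrow> nat) \<Rightarrow> (nat \<Rightarrow> (nat \<Rightarrow> 'a) set) set" where
  "PL l K n = {L. (\<forall>i<l. subspace (K i) (n i) (L i)) \<and> (\<forall>i. l \<le> i \<longrightarrow> L i = {})}"

definition Ptop :: "nat \<Rightarrow> (nat \<Rightarrow> ('a, 'b) ring_scheme) \<Rightarrow> (nat \<Rightarrow> nat) \<Rightarrow> nat \<Rightarrow> (nat \<Rightarrow> 'a) set" where
  "Ptop l K n = (\<lambda>i. if i < l then vecs (K i) (n i) else {})"

definition Psum :: "nat \<Rightarrow> (nat \<Rightarrow> ('a, 'b) ring_scheme) \<Rightarrow> (nat \<Rightarrow> (nat \<Rightarrow> 'a) set) \<Rightarrow> (nat \<Rightarrow> (nat \<Rightarrow> 'a) set) \<Rightarrow> nat \<Rightarrow> (nat \<Rightarrow> 'a) set" where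
  "Psum l K L L' = (\<lambda>i. if i < l then {vadd (K i) v w | v w. v \<in> L i \<and> w \<in> L' i} else {})"

definition Pinter :: "(nat \<Rightarrow> (nat \<Rightarrow> 'a) set) \<Rightarrow> (nat \<Rightarrow> (nat \<Rightarrow> 'a) set) \<Rightarrow> nat \<Rightarrow> (nat \<Rightarrow> 'a) set" where
  "Pinter L L' = (\<lambda>i. L i \<inter> L' i)"

definition Pperp :: "nat \<Rightarrow> (nat \<Rightarrow> ('a, 'b) ring_scheme) \<Rightarrow> (nat \<Rightarrow> nat) \<Rightarrow> (nat \<Rightarrow> (nat \<Rightarrow> 'a) set) \<Rightarrow> nat \<Rightarrow> (nat \<Rightarrow> 'a) set" where
  "Pperp l K n L = (\<lambda>i. if i < l then perp (K i) (n i) (L i) else {})"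

definition Pincl :: "nat \<Rightarrow> (nat \<Rightarrow> (nat \<Rightarrow> 'a) set) \<Rightarrow> (nat \<Rightarrow> (nat \<Rightarrow> 'a) set) \<Rightarrow> bool" where
  "Pincl l L L' \<longleftrightarrow> (\<forall>i<l. L i \<subseteq> L' i)"

definition Rk :: "nat \<Rightarrow> (nat \<Rightarrow> ('a, 'b) ring_scheme) \<Rightarrow> (nat \<Rightarrow> (nat \<Rightarrow> 'a) set) \<Rightarrow> int" where
  "Rk l K L = (\<Sum>i<l. int (vdim (K i) (L i)))"

definition rank_function :: "nat \<Rightarrow> (nat \<Rightarrow> ('a, 'b) ring_scheme) \<Rightarrow> (nat \<Rightarrow> nat) \<Rightarrow> ((nat \<Rightarrow> (nat \<Rightarrow> 'a) set) \<Rightarrow> int) \<Rightarrow> bool" where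
  "rank_function l K n \<rho> \<longleftrightarrow>
     (\<forall>L\<in>PL l K n. 0 \<le> \<rho> L \<and> \<rho> L \<le> Rk l K L) \<and>
     (\<forall>L\<in>PL l K n. \<forall>L'\<in>PL l K n. Pincl l L L' \<longrightarrow> \<rho> L \<le> \<rho> L') \<and>
     (\<forall>L\<in>PL l K n. \<forall>L'\<in>PL l K n.
        \<rho> (Psum l K L L') + \<rho> (Pinter L L') \<le> \<rho> L + \<rho> L')"

definition dual_rank :: "nat \<Rightarrow> (nat \<Rightarrow> ('a, 'b) ring_scheme) \<Rightarrow> (nat \<Rightarrow> nat) \<Rightarrow> ((nat \<Rightarrow> (nat \<Rightarrow> 'a) set) \<Rightarrow> int) \<Rightarrow> (nat \<Rightarrow> (nat \<Rightarrow> 'a) set) \<Rightarrow> int" where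
  "dual_rank l K n \<rho> L = \<rho> (Pperp l K n L) + Rk l K L - \<rho> (Ptop l K n)"

end

theory Submission
  imports Defs
begin

text \<open>
Over a field with \<open>q\<close> elements a subspace \<open>W\<close> has exactly \<open>q ^ dim W\<close> elements, so dimension
identities can be proved by counting. The fibres of the addition map \<open>X \<times> Y \<rightarrow> X + Y\<close> are
translates of \<open>X \<inter> Y\<close>, which gives \<open>dim (X + Y) + dim (X \<inter> Y) = dim X + dim Y\<close>; counting the
pairs \<open>(x, w) \<in> X \<times> K\<^sup>n\<close> with \<open>x \<cdot> w = 0\<close> once by \<open>x\<close> and once by \<open>w\<close> gives
\<open>|X\<^sup>\<perp>| |X| = q\<^sup>n\<close>, i.e. \<open>dim X\<^sup>\<perp> = n - dim X\<close>. Hence \<open>(X + Y)\<^sup>\<perp> = X\<^sup>\<perp> \<inter> Y\<^sup>\<perp>\<close> and, comparing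
dimensions, \<open>(X \<inter> Y)\<^sup>\<perp> = X\<^sup>\<perp> + Y\<^sup>\<perp>\<close>.

As \<open>\<perp>\<close> exchanges \<open>+\<close> and \<open>\<inter>\<close> componentwise and \<open>Rk\<close> is modular, (R3) for \<open>\<rho>\<^sup>*\<close> is (R3) for \<open>\<rho>\<close>
at \<open>L\<^sup>\<perp>, L'\<^sup>\<perp>\<close>, and the upper bound in (R1) is monotonicity of \<open>\<rho>\<close>. (R2) and the lower bound in
(R1) reduce to \<open>\<rho> A \<le> \<rho> B + Rk A - Rk B\<close> for \<open>B \<subseteq> A\<close>, which follows by adding lines to \<open>B\<close>
one at a time: each line raises \<open>Rk\<close> by exactly one and, by submodularity and (R1), \<open>\<rho>\<close> by at
most one.
\<close>

section \<open>Vectors over a finite field\<close>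

lemma card_eq_mult_if_fibers_card:
  assumes "finite A" "g ` A = C" "\<And>c. c \<in> C \<Longrightarrow> card {a\<in>A. g a = c} = k"
  shows "card A = card C * k"
proof -
  have "(\<Sum>a\<in>A. card {c\<in>C. g a = c}) = k * card C"
    using assms by (intro sum_multicount) (auto simp: conj_commute)
  moreover have "{c\<in>C. g a = c} = {g a}" if "a \<in> A" for a
    using that assms(2) by blast
  ultimately show ?thesis by simp
qed

locale finite_field_space = field K for K :: "('a, 'b) ring_scheme" (structure) +
  fixes n :: nat
  assumes finite_carrier: "finite (carrier K)"
begin

abbreviation "q \<equiv> card (carrier K)"
abbreviation "V \<equiv> vecs K n"

lemma vadd_apply: "vadd K v w j = v j \<oplus> w j"
  by (simp add: vadd_def)

lemma vsmult_apply: "vsmult K c v j = c \<otimes> v j"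
  by (simp add: vsmult_def)

lemma vzero_apply: "vzero K j = \<zero>"
  by (simp add: vzero_def)

lemmas vec_apply = vadd_apply vsmult_apply vzero_apply

lemma vecs_carrier: "v \<in> V \<Longrightarrow> v j \<in> carrier K"
  unfolding vecs_def by (cases "j < n") auto

lemma subset_vecs_carrier [simp]: "B \<subseteq> V \<Longrightarrow> v \<in> B \<Longrightarrow> v j \<in> carrier K"
  using vecs_carrier by blast

lemma funcset_carrier [simp]: "c \<in> B \<rightarrow> carrier K \<Longrightarrow> b \<in> B \<Longrightarrow> c b \<in> carrier K"
  by blast

lemma vecs_beyond: "v \<in> V \<Longrightarrow> n \<le> j \<Longrightarrow> v j = \<zero>"
  unfolding vecs_def by auto

lemma vecsI: "(\<And>j. j < n \<Longrightarrow> v j \<in> carrier K) \<Longrightarrow> (\<And>j. n \<le> j \<Longrightarrow> v j = \<zero>) \<Longrightarrow> v \<in> V"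
  unfolding vecs_def by auto

lemma vzero_in_vecs [simp]: "vzero K \<in> V"
  by (rule vecsI) (auto simp: vzero_apply)

lemma vadd_in_vecs [simp]: "v \<in> V \<Longrightarrow> w \<in> V \<Longrightarrow> vadd K v w \<in> V"
  by (rule vecsI) (auto simp: vadd_apply vecs_carrier vecs_beyond)

lemma vsmult_in_vecs [simp]: "c \<in> carrier K \<Longrightarrow> v \<in> V \<Longrightarrow> vsmult K c v \<in> V"
  by (rule vecsI) (auto simp: vsmult_apply vecs_carrier vecs_beyond)

lemma vadd_vzero [simp]: "v \<in> V \<Longrightarrow> vadd K v (vzero K) = v"
  by (auto simp: vecs_carrier vec_apply)

lemma vzero_vadd [simp]: "v \<in> V \<Longrightarrow> vadd K (vzero K) v = v"
  by (auto simp: vecs_carrier vec_apply)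

lemma vsmult_zero [simp]: "v \<in> V \<Longrightarrow> vsmult K \<zero> v = vzero K"
  by (auto simp: vecs_carrier vec_apply)

definition vneg :: "(nat \<Rightarrow> 'a) \<Rightarrow> nat \<Rightarrow> 'a" where
  "vneg v = vsmult K (\<ominus> \<one>) v"

lemma vneg_in_vecs [simp]: "v \<in> V \<Longrightarrow> vneg v \<in> V"
  by (simp add: vneg_def)

lemma vneg_apply: "v \<in> V \<Longrightarrow> vneg v j = \<ominus> v j"
  by (simp add: vneg_def vecs_carrier l_minus vec_apply)

lemma vadd_vneg_cancel_left [simp]: "u \<in> V \<Longrightarrow> v \<in> V \<Longrightarrow> vadd K u (vadd K (vneg u) v) = v"
  by (rule ext) (simp add: vneg_apply vecs_carrier a_assoc[symmetric] r_neg vec_apply)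

lemma vadd_vneg [simp]: "v \<in> V \<Longrightarrow> vadd K v (vneg v) = vzero K"
  by (rule ext) (simp add: vneg_apply vecs_carrier r_neg vec_apply)

lemma vneg_vadd_cancel_left [simp]: "u \<in> V \<Longrightarrow> v \<in> V \<Longrightarrow> vadd K (vneg u) (vadd K u v) = v"
  by (rule ext) (simp add: vneg_apply vecs_carrier a_assoc[symmetric] l_neg vec_apply)

lemma vadd_left_cancel: "u \<in> V \<Longrightarrow> v \<in> V \<Longrightarrow> w \<in> V \<Longrightarrow> vadd K u v = vadd K u w \<Longrightarrow> v = w"
  by (metis vneg_vadd_cancel_left)

lemma vadd_vadd_swap:
  "a \<in> V \<Longrightarrow> b \<in> V \<Longrightarrow> c \<in> V \<Longrightarrow> d \<in> V \<Longrightarrow>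
    vadd K (vadd K a b) (vadd K c d) = vadd K (vadd K a c) (vadd K b d)"
  by (rule ext) (simp add: vadd_apply vecs_carrier a_ac)

lemma vsmult_vadd:
  "c \<in> carrier K \<Longrightarrow> v \<in> V \<Longrightarrow> w \<in> V \<Longrightarrow> vsmult K c (vadd K v w) = vadd K (vsmult K c v) (vsmult K c w)"
  by (rule ext) (simp add: vec_apply vecs_carrier r_distr)

lemma vadd_vneg_shift:
  assumes "v \<in> V" "w \<in> V" "u \<in> V"
  shows "vadd K (vadd K v u) (vadd K w (vneg u)) = vadd K v w"
proof (rule ext)
  fix j
  have "(v j \<oplus> u j) \<oplus> (w j \<oplus> \<ominus> u j) = v j \<oplus> w j"
    using assms vecs_carrier by algebra
  then show "vadd K (vadd K v u) (vadd K w (vneg u)) j = vadd K v w j"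
    using assms by (simp add: vadd_apply vneg_apply)
qed

lemma vadd_vneg_vadd_vneg:
  assumes "u \<in> V" "w \<in> V"
  shows "vadd K u (vneg (vadd K u (vneg w))) = w"
proof (rule ext)
  fix j
  have "u j \<oplus> \<ominus> (u j \<oplus> \<ominus> w j) = w j"
    using assms vecs_carrier by algebra
  then show "vadd K u (vneg (vadd K u (vneg w))) j = w j"
    using assms by (simp add: vadd_apply vneg_apply)
qed

lemma vadd_eq_vadd_imp_vneg_vadd:
  assumes V4: "v \<in> V" "w \<in> V" "v0 \<in> V" "w0 \<in> V" and eq: "vadd K v w = vadd K v0 w0"
  shows "vadd K (vneg v0) v = vadd K w0 (vneg w)"
proof (rule ext)
  fix j
  have carr: "v j \<in> carrier K" "w j \<in> carrier K" "v0 j \<in> carrier K" "w0 j \<in> carrier K"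
    using V4 vecs_carrier by auto
  have "\<ominus> v0 j \<oplus> v j = \<ominus> v0 j \<oplus> (v j \<oplus> w j) \<oplus> \<ominus> w j"
    using carr by algebra
  also have "\<dots> = \<ominus> v0 j \<oplus> (v0 j \<oplus> w0 j) \<oplus> \<ominus> w j"
    using fun_cong[OF eq, of j] by (simp add: vadd_apply)
  also have "\<dots> = w0 j \<oplus> \<ominus> w j"
    using carr by algebra
  finally show "vadd K (vneg v0) v j = vadd K w0 (vneg w) j"
    using V4 by (simp add: vadd_apply vneg_apply)
qed

lemma card_translate: "u \<in> V \<Longrightarrow> U \<subseteq> V \<Longrightarrow> card (vadd K u ` U) = card U"
  by (intro card_image inj_onI) (auto dest: vadd_left_cancel)

lemma card_carrier_gt_1: "1 < q"
proof -
  have "card {\<zero>, \<one>} \<le> q"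
    using finite_carrier by (intro card_mono) auto
  thus ?thesis by simp
qed

lemma card_vecs: "card V = q ^ n"
proof -
  let ?ext = "\<lambda>f j. if j < n then f j else \<zero>"
  have "V = ?ext ` ({..<n} \<rightarrow>\<^sub>E carrier K)"
  proof (intro equalityI subsetI)
    fix v assume v: "v \<in> V"
    have "v = ?ext (restrict v {..<n})"
      using vecs_beyond[OF v] by (auto simp: fun_eq_iff)
    moreover have "restrict v {..<n} \<in> {..<n} \<rightarrow>\<^sub>E carrier K"
      using vecs_carrier[OF v] by auto
    ultimately show "v \<in> ?ext ` ({..<n} \<rightarrow>\<^sub>E carrier K)" by (rule image_eqI)
  next
    fix v assume "v \<in> ?ext ` ({..<n} \<rightarrow>\<^sub>E carrier K)"
    then obtain f where "f \<in> {..<n} \<rightarrow>\<^sub>E carrier K" "v = ?ext f" by blast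
    then show "v \<in> V" by (intro vecsI) auto
  qed
  moreover have "inj_on ?ext ({..<n} \<rightarrow>\<^sub>E carrier K)"
  proof (rule inj_onI, rule ext)
    fix f g j assume f: "f \<in> {..<n} \<rightarrow>\<^sub>E carrier K" and g: "g \<in> {..<n} \<rightarrow>\<^sub>E carrier K"
      and eq: "?ext f = ?ext g"
    show "f j = g j"
      using fun_cong[OF eq, of j] PiE_arb[OF f, of j] PiE_arb[OF g, of j] by (cases "j < n") auto
  qed
  ultimately have "card V = card ({..<n} \<rightarrow>\<^sub>E carrier K)"
    by (simp add: card_image)
  also have "\<dots> = q ^ n"
    using finite_carrier by (simp add: card_PiE)
  finally show ?thesis .
qed

lemma finite_vecs: "finite V"
  using card_vecs card_carrier_gt_1 by (metis card.infinite not_one_less_zero power_eq_0_iff)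

lemma subspace_subset_vecs: "subspace K n W \<Longrightarrow> W \<subseteq> V"
  by (simp add: subspace_def)

lemma subspace_vzero: "subspace K n W \<Longrightarrow> vzero K \<in> W"
  by (simp add: subspace_def)

lemma subspace_vadd: "subspace K n W \<Longrightarrow> v \<in> W \<Longrightarrow> w \<in> W \<Longrightarrow> vadd K v w \<in> W"
  by (simp add: subspace_def)

lemma subspace_vsmult: "subspace K n W \<Longrightarrow> c \<in> carrier K \<Longrightarrow> v \<in> W \<Longrightarrow> vsmult K c v \<in> W"
  by (simp add: subspace_def)

lemma subspace_vneg: "subspace K n W \<Longrightarrow> v \<in> W \<Longrightarrow> vneg v \<in> W"
  unfolding vneg_def by (simp add: subspace_vsmult)

lemma finite_subspace: "subspace K n W \<Longrightarrow> finite W"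
  using finite_vecs finite_subset subspace_subset_vecs by blast

lemma subspace_vecs: "subspace K n V"
  unfolding subspace_def by simp

lemma subspace_vzero_only: "subspace K n {vzero K}"
  unfolding subspace_def by (simp add: fun_eq_iff vec_apply)

lemma subspace_Int: "subspace K n X \<Longrightarrow> subspace K n Y \<Longrightarrow> subspace K n (X \<inter> Y)"
  unfolding subspace_def by auto

section \<open>Linear combinations and dimension\<close>

lemma lincomb_apply: "lincomb K c B j = (\<Oplus>b\<in>B. c b \<otimes> b j)"
  by (simp add: lincomb_def)

lemma lincomb_in_vecs:
  assumes "finite B" "B \<subseteq> V" "c \<in> B \<rightarrow> carrier K"
  shows "lincomb K c B \<in> V"
proof (rule vecsI)
  fix j
  show "lincomb K c B j \<in> carrier K"
    unfolding lincomb_apply using assms by (auto intro!: finsum_closed simp: vecs_carrier)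
  assume "n \<le> j"
  then show "lincomb K c B j = \<zero>"
    unfolding lincomb_apply using assms by (intro add.finprod_one_eqI) (auto simp: vecs_beyond)
qed

lemma lincomb_insert:
  assumes "finite B" "b \<notin> B" "insert b B \<subseteq> V" "c \<in> insert b B \<rightarrow> carrier K"
  shows "lincomb K c (insert b B) = vadd K (vsmult K (c b) b) (lincomb K c B)"
  unfolding lincomb_def vadd_def vsmult_def using assms
  by (intro ext, subst finsum_insert) (auto simp: vecs_carrier)

lemma lincomb_empty [simp]: "lincomb K c {} = vzero K"
  by (simp add: lincomb_def vzero_def)

lemma lincomb_cong:
  "B \<subseteq> V \<Longrightarrow> d \<in> B \<rightarrow> carrier K \<Longrightarrow> (\<And>b. b \<in> B \<Longrightarrow> c b = d b) \<Longrightarrow> lincomb K c B = lincomb K d B"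
  unfolding lincomb_def by (intro ext add.finprod_cong') auto

lemma lincomb_zero: "B \<subseteq> V \<Longrightarrow> lincomb K (\<lambda>b. \<zero>) B = vzero K"
  unfolding lincomb_def vzero_def by (intro ext add.finprod_one_eqI) (auto simp: vecs_carrier)

lemma lincomb_add:
  assumes "finite B" "B \<subseteq> V" "c \<in> B \<rightarrow> carrier K" "d \<in> B \<rightarrow> carrier K"
  shows "lincomb K (\<lambda>b. c b \<oplus> d b) B = vadd K (lincomb K c B) (lincomb K d B)"
proof (rule ext)
  fix j
  have "(\<Oplus>b\<in>B. (c b \<oplus> d b) \<otimes> b j) = (\<Oplus>b\<in>B. c b \<otimes> b j \<oplus> d b \<otimes> b j)"
    using assms by (intro add.finprod_cong') (auto simp: l_distr vecs_carrier)
  also have "\<dots> = (\<Oplus>b\<in>B. c b \<otimes> b j) \<oplus> (\<Oplus>b\<in>B. d b \<otimes> b j)"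
    using assms by (intro finsum_addf) (auto simp: vecs_carrier)
  finally show "lincomb K (\<lambda>b. c b \<oplus> d b) B j = vadd K (lincomb K c B) (lincomb K d B) j"
    by (simp add: lincomb_apply vadd_apply)
qed

lemma lincomb_smult:
  assumes "finite B" "B \<subseteq> V" "c \<in> B \<rightarrow> carrier K" "a \<in> carrier K"
  shows "lincomb K (\<lambda>b. a \<otimes> c b) B = vsmult K a (lincomb K c B)"
proof (rule ext)
  fix j
  have "(\<Oplus>b\<in>B. (a \<otimes> c b) \<otimes> b j) = (\<Oplus>b\<in>B. a \<otimes> (c b \<otimes> b j))"
    using assms by (intro add.finprod_cong') (auto simp: m_assoc vecs_carrier)
  also have "\<dots> = a \<otimes> (\<Oplus>b\<in>B. c b \<otimes> b j)"
    using assms by (intro finsum_rdistr[symmetric]) (auto simp: vecs_carrier)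
  finally show "lincomb K (\<lambda>b. a \<otimes> c b) B j = vsmult K a (lincomb K c B) j"
    by (simp add: lincomb_apply vsmult_apply)
qed

lemma lincomb_in_subspace:
  assumes W: "subspace K n W" and "finite B" "B \<subseteq> W" "c \<in> B \<rightarrow> carrier K"
  shows "lincomb K c B \<in> W"
  using assms(2-4)
proof (induction B rule: finite_induct)
  case empty
  then show ?case
    using W by (simp add: subspace_vzero)
next
  case (insert b B)
  then have "lincomb K c (insert b B) = vadd K (vsmult K (c b) b) (lincomb K c B)"
    using subspace_subset_vecs[OF W] by (intro lincomb_insert) auto
  with insert show ?case
    by (simp add: W subspace_vadd subspace_vsmult)
qed

lemma subspace_span:
  assumes "finite B" "B \<subseteq> V"
  shows "subspace K n (span K B)"
  unfolding subspace_def
proof (intro conjI ballI)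
  show "span K B \<subseteq> V"
    using assms lincomb_in_vecs by (auto simp: span_def)
  show "vzero K \<in> span K B"
    using lincomb_zero[OF assms(2)] unfolding span_def by force
next
  fix v w assume "v \<in> span K B" "w \<in> span K B"
  then obtain c d where "c \<in> B \<rightarrow> carrier K" "d \<in> B \<rightarrow> carrier K"
    "v = lincomb K c B" "w = lincomb K d B"
    by (auto simp: span_def)
  then show "vadd K v w \<in> span K B"
    using lincomb_add[OF assms] unfolding span_def
    by (intro CollectI exI[of _ "\<lambda>b. c b \<oplus> d b"]) auto
next
  fix a v assume "a \<in> carrier K" "v \<in> span K B"
  then obtain c where "c \<in> B \<rightarrow> carrier K" "v = lincomb K c B"
    by (auto simp: span_def)
  then show "vsmult K a v \<in> span K B"
    using lincomb_smult[OF assms] \<open>a \<in> carrier K\<close> unfolding span_def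
    by (intro CollectI exI[of _ "\<lambda>b. a \<otimes> c b"]) auto
qed

lemma span_subset: "subspace K n W \<Longrightarrow> finite B \<Longrightarrow> B \<subseteq> W \<Longrightarrow> span K B \<subseteq> W"
  using lincomb_in_subspace by (auto simp: span_def)

lemma span_superset:
  assumes "finite B" "B \<subseteq> V"
  shows "B \<subseteq> span K B"
proof
  fix x assume "x \<in> B"
  let ?c = "\<lambda>b. if b = x then \<one> else \<zero>"
  have "lincomb K ?c B = x"
  proof (rule ext)
    fix j
    have "(\<Oplus>b\<in>B. ?c b \<otimes> b j) = (\<Oplus>b\<in>B. if x = b then x j else \<zero>)"
      using assms \<open>x \<in> B\<close> by (intro add.finprod_cong') (auto simp: vecs_carrier)
    also have "\<dots> = x j"
      using assms \<open>x \<in> B\<close> by (intro add.finprod_singleton) (auto simp: vecs_carrier)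
    finally show "lincomb K ?c B j = x j"
      by (simp add: lincomb_apply)
  qed
  then show "x \<in> span K B"
    unfolding span_def by (intro CollectI exI[of _ ?c]) auto
qed

lemma solve_vadd_vsmult_eq_vzero:
  assumes "a \<in> carrier K" "a \<noteq> \<zero>" "x \<in> V" "w \<in> V" "vadd K (vsmult K a x) w = vzero K"
  shows "x = vsmult K (\<ominus> (inv a)) w"
proof (rule ext)
  fix j
  have inv: "inv a \<in> carrier K" "inv a \<otimes> a = \<one>"
    using assms(1,2) field_Units by auto
  have xj: "x j \<in> carrier K" and wj: "w j \<in> carrier K"
    using assms(3,4) vecs_carrier by auto
  have "a \<otimes> x j = \<ominus> w j"
    using fun_cong[OF assms(5), of j] assms(1) xj wj by (simp add: vec_apply minus_equality)
  then have "inv a \<otimes> (a \<otimes> x j) = inv a \<otimes> \<ominus> w j"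
    by simp
  then show "x j = vsmult K (\<ominus> (inv a)) w j"
    using inv assms(1) xj wj by (simp add: vec_apply m_assoc[symmetric] l_minus r_minus)
qed

lemma lin_indep_insert:
  assumes indep: "lin_indep K B" and B: "B \<subseteq> V" and x: "x \<in> V" "x \<notin> span K B"
  shows "lin_indep K (insert x B)"
  unfolding lin_indep_def
proof (intro conjI allI impI)
  have fin: "finite B"
    using indep by (simp add: lin_indep_def)
  then show "finite (insert x B)"
    by simp
  fix c assume c: "c \<in> insert x B \<rightarrow> carrier K" and zero: "lincomb K c (insert x B) = vzero K"
  have "x \<notin> B"
    using span_superset[OF fin B] x(2) by blast
  then have sum: "vadd K (vsmult K (c x) x) (lincomb K c B) = vzero K"
    using zero lincomb_insert[OF fin _ _ c] B x(1) by simp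
  have cB: "c \<in> B \<rightarrow> carrier K" and cx: "c x \<in> carrier K"
    using c by auto
  have cx0: "c x = \<zero>"
  proof (rule ccontr)
    assume "c x \<noteq> \<zero>"
    then have "x = vsmult K (\<ominus> (inv (c x))) (lincomb K c B)"
      using solve_vadd_vsmult_eq_vzero[OF cx _ x(1) lincomb_in_vecs[OF fin B cB] sum] by simp
    moreover have "lincomb K c B \<in> span K B"
      unfolding span_def using cB by blast
    then have "vsmult K (\<ominus> (inv (c x))) (lincomb K c B) \<in> span K B"
      using \<open>c x \<noteq> \<zero>\<close> cx field_Units by (intro subspace_vsmult[OF subspace_span[OF fin B]]) auto
    ultimately show False
      using x(2) by simp
  qed
  then have "lincomb K c B = vzero K"
    using sum x(1) cB fin B lincomb_in_vecs by simp
  then have "\<forall>b\<in>B. c b = \<zero>"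
    using indep cB by (simp add: lin_indep_def)
  with cx0 show "\<forall>b\<in>insert x B. c b = \<zero>"
    by simp
qed

lemma lincomb_inj_on:
  assumes indep: "lin_indep K B" and B: "B \<subseteq> V"
  shows "inj_on (\<lambda>c. lincomb K c B) (B \<rightarrow>\<^sub>E carrier K)"
proof (rule inj_onI)
  fix c d assume c: "c \<in> B \<rightarrow>\<^sub>E carrier K" and d: "d \<in> B \<rightarrow>\<^sub>E carrier K"
    and eq: "lincomb K c B = lincomb K d B"
  have fin: "finite B"
    using indep by (simp add: lin_indep_def)
  have cB: "c \<in> B \<rightarrow> carrier K" and dB: "d \<in> B \<rightarrow> carrier K" and nd: "(\<lambda>b. \<ominus> \<one> \<otimes> d b) \<in> B \<rightarrow> carrier K"
    using c d by auto
  have "lincomb K (\<lambda>b. c b \<oplus> \<ominus> \<one> \<otimes> d b) B = vadd K (lincomb K c B) (lincomb K (\<lambda>b. \<ominus> \<one> \<otimes> d b) B)"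
    using lincomb_add[OF fin B cB nd] .
  also have "\<dots> = vadd K (lincomb K c B) (vneg (lincomb K d B))"
    using lincomb_smult[OF fin B dB] by (simp add: vneg_def)
  also have "\<dots> = vzero K"
    using eq lincomb_in_vecs[OF fin B dB] by simp
  moreover have "(\<lambda>b. c b \<oplus> \<ominus> \<one> \<otimes> d b) \<in> B \<rightarrow> carrier K"
    using cB nd by auto
  ultimately have diff: "\<forall>b\<in>B. c b \<oplus> \<ominus> d b = \<zero>"
    using indep dB unfolding lin_indep_def by (auto simp: l_minus)
  have same: "\<forall>b\<in>B. c b = d b"
  proof
    fix b assume "b \<in> B"
    then have "c b = \<ominus> (\<ominus> d b)"
      using cB dB diff by (intro sum_zero_eq_neg) auto
    then show "c b = d b"
      using dB \<open>b \<in> B\<close> minus_minus by auto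
  qed
  show "c = d"
  proof (rule ext)
    fix b
    show "c b = d b"
      using same PiE_arb[OF c, of b] PiE_arb[OF d, of b] by (cases "b \<in> B") auto
  qed
qed

lemma card_span:
  assumes indep: "lin_indep K B" and B: "B \<subseteq> V"
  shows "card (span K B) = q ^ card B"
proof -
  have fin: "finite B"
    using indep by (simp add: lin_indep_def)
  have "span K B = (\<lambda>c. lincomb K c B) ` (B \<rightarrow>\<^sub>E carrier K)"
  proof (intro equalityI subsetI)
    fix v assume "v \<in> span K B"
    then obtain c where c: "c \<in> B \<rightarrow> carrier K" "v = lincomb K c B"
      by (auto simp: span_def)
    have "lincomb K c B = lincomb K (restrict c B) B"
      using B c by (intro lincomb_cong) auto
    with c have "v = lincomb K (restrict c B) B"
      by simp
    then show "v \<in> (\<lambda>c. lincomb K c B) ` (B \<rightarrow>\<^sub>E carrier K)"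
      using c by auto
  next
    fix v assume "v \<in> (\<lambda>c. lincomb K c B) ` (B \<rightarrow>\<^sub>E carrier K)"
    then show "v \<in> span K B"
      unfolding span_def by (auto dest: PiE_mem)
  qed
  then have "card (span K B) = card (B \<rightarrow>\<^sub>E carrier K)"
    using lincomb_inj_on[OF indep B] by (simp add: card_image)
  also have "\<dots> = q ^ card B"
    using fin by (simp add: card_PiE)
  finally show ?thesis .
qed

lemma exists_basis:
  assumes W: "subspace K n W"
  shows "\<exists>B. is_basis K W B"
proof -
  let ?I = "{B. B \<subseteq> W \<and> lin_indep K B}"
  have "finite ?I"
  proof (rule finite_subset)
    show "?I \<subseteq> Pow W"
      by blast
    show "finite (Pow W)"
      using finite_subspace[OF W] by simp
  qed
  moreover have "{} \<in> ?I"
    by (simp add: lin_indep_def)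
  ultimately obtain B where B: "B \<in> ?I" and max: "\<forall>B'\<in>?I. B \<subseteq> B' \<longrightarrow> B = B'"
    using finite_has_maximal[of ?I] by blast
  have WV: "W \<subseteq> V" and BV: "B \<subseteq> V" and fin: "finite B"
    using B subspace_subset_vecs[OF W] by (auto simp: lin_indep_def)
  have "W \<subseteq> span K B"
  proof
    fix x assume "x \<in> W"
    show "x \<in> span K B"
    proof (rule ccontr)
      assume "x \<notin> span K B"
      then have "insert x B \<in> ?I"
        using B \<open>x \<in> W\<close> WV by (auto intro: lin_indep_insert)
      then show False
        using max \<open>x \<notin> span K B\<close> span_superset[OF fin BV] by blast
    qed
  qed
  then have "span K B = W"
    using span_subset[OF W fin] B by blast
  then show ?thesis
    using B by (auto simp: is_basis_def)
qed

lemma card_subspace: "subspace K n W \<Longrightarrow> card W = q ^ vdim K W"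
proof -
  assume W: "subspace K n W"
  have "\<exists>B. is_basis K W B \<and> card B = vdim K W"
    unfolding vdim_def by (rule someI_ex) (use exists_basis[OF W] in blast)
  then obtain B where B: "is_basis K W B" "card B = vdim K W"
    by blast
  then show ?thesis
    using card_span subspace_subset_vecs[OF W] by (force simp: is_basis_def)
qed

lemma vdim_eqI: "subspace K n W \<Longrightarrow> card W = q ^ d \<Longrightarrow> vdim K W = d"
  using card_subspace card_carrier_gt_1 by (metis power_inject_exp)

lemma vdim_mono: "subspace K n W \<Longrightarrow> subspace K n U \<Longrightarrow> W \<subseteq> U \<Longrightarrow> vdim K W \<le> vdim K U"
  using card_subspace card_mono finite_subspace card_carrier_gt_1 by (metis power_le_imp_le_exp)

lemma subspace_eq_if_vdim_eq:
  "subspace K n W \<Longrightarrow> subspace K n U \<Longrightarrow> W \<subseteq> U \<Longrightarrow> vdim K W = vdim K U \<Longrightarrow> W = U"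
  using card_subspace finite_subspace by (metis card_subset_eq)

lemma vdim_vecs: "vdim K V = n"
  using vdim_eqI[OF subspace_vecs card_vecs] .

lemma vdim_vzero_only: "vdim K {vzero K} = 0"
  using vdim_eqI[OF subspace_vzero_only] by simp

section \<open>Linear functionals and orthogonal complements\<close>

definition linear_functional :: "(nat \<Rightarrow> 'a) set \<Rightarrow> ((nat \<Rightarrow> 'a) \<Rightarrow> 'a) \<Rightarrow> bool" where
  "linear_functional W f \<longleftrightarrow> (\<forall>v\<in>W. f v \<in> carrier K) \<and>
     (\<forall>v\<in>W. \<forall>w\<in>W. f (vadd K v w) = f v \<oplus> f w) \<and>
     (\<forall>c\<in>carrier K. \<forall>v\<in>W. f (vsmult K c v) = c \<otimes> f v)"

lemma
  assumes "linear_functional W f"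
  shows linear_functional_in_carrier: "v \<in> W \<Longrightarrow> f v \<in> carrier K"
    and linear_functional_vadd: "v \<in> W \<Longrightarrow> w \<in> W \<Longrightarrow> f (vadd K v w) = f v \<oplus> f w"
    and linear_functional_vsmult: "c \<in> carrier K \<Longrightarrow> v \<in> W \<Longrightarrow> f (vsmult K c v) = c \<otimes> f v"
  using assms by (simp_all add: linear_functional_def)

lemma linear_functional_fiber:
  assumes W: "subspace K n W" and f: "linear_functional W f" and w0: "w0 \<in> W"
  shows "{v\<in>W. f v = f w0} = vadd K w0 ` {v\<in>W. f v = \<zero>}"
proof (intro equalityI subsetI)
  fix v assume "v \<in> {v\<in>W. f v = f w0}"
  then have v: "v \<in> W" "f v = f w0"
    by auto
  have "f (vneg w0) = \<ominus> f w0"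
    using linear_functional_vsmult[OF f _ w0] linear_functional_in_carrier[OF f w0]
    by (simp add: vneg_def l_minus)
  then have "f (vadd K (vneg w0) v) = \<zero>"
    using linear_functional_vadd[OF f subspace_vneg[OF W w0] v(1)] v(2)
      linear_functional_in_carrier[OF f w0] by (simp add: l_neg)
  moreover have "vadd K (vneg w0) v \<in> W"
    using W w0 v(1) by (simp add: subspace_vneg subspace_vadd)
  moreover have "v \<in> V" "w0 \<in> V"
    using v(1) w0 subspace_subset_vecs[OF W] by auto
  then have "v = vadd K w0 (vadd K (vneg w0) v)"
    by simp
  ultimately show "v \<in> vadd K w0 ` {v\<in>W. f v = \<zero>}"
    by blast
next
  fix v assume "v \<in> vadd K w0 ` {v\<in>W. f v = \<zero>}"
  then obtain u where "u \<in> W" "f u = \<zero>" "v = vadd K w0 u"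
    by blast
  then show "v \<in> {v\<in>W. f v = f w0}"
    using W w0 linear_functional_vadd[OF f w0] linear_functional_in_carrier[OF f w0]
    by (simp add: subspace_vadd)
qed

lemma card_linear_functional_kernel:
  assumes W: "subspace K n W" and f: "linear_functional W f" and v0: "v0 \<in> W" "f v0 \<noteq> \<zero>"
  shows "card W = q * card {v\<in>W. f v = \<zero>}"
proof -
  have fv0: "f v0 \<in> carrier K" "inv (f v0) \<in> carrier K" "inv (f v0) \<otimes> f v0 = \<one>"
    using linear_functional_in_carrier[OF f v0(1)] v0(2) field_Units by auto
  define u where "u c = vsmult K (c \<otimes> inv (f v0)) v0" for c
  have u: "u c \<in> W" "f (u c) = c" if "c \<in> carrier K" for c
    using that fv0 linear_functional_vsmult[OF f _ v0(1)] subspace_vsmult[OF W _ v0(1)]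
    by (simp_all add: u_def m_assoc)
  have "f ` W = carrier K"
    using linear_functional_in_carrier[OF f] u by (metis image_eqI image_subsetI subsetI subset_antisym)
  moreover have "card {v\<in>W. f v = c} = card {v\<in>W. f v = \<zero>}" if "c \<in> carrier K" for c
  proof -
    have "u c \<in> V" "{v\<in>W. f v = \<zero>} \<subseteq> V"
      using u(1)[OF that] subspace_subset_vecs[OF W] by auto
    then show ?thesis
      using linear_functional_fiber[OF W f u(1)[OF that]] u(2)[OF that] by (simp add: card_translate)
  qed
  ultimately show ?thesis
    by (intro card_eq_mult_if_fibers_card[OF finite_subspace[OF W]])
qed

definition dot :: "(nat \<Rightarrow> 'a) \<Rightarrow> (nat \<Rightarrow> 'a) \<Rightarrow> 'a" where
  "dot v w = (\<Oplus>j\<in>{..<n}. v j \<otimes> w j)"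

lemma perp_eq: "perp K n X = {w \<in> V. \<forall>v\<in>X. dot v w = \<zero>}"
  by (simp add: perp_def dot_def)

lemma dot_in_carrier [simp]: "v \<in> V \<Longrightarrow> w \<in> V \<Longrightarrow> dot v w \<in> carrier K"
  unfolding dot_def by (auto intro!: finsum_closed simp: vecs_carrier)

lemma dot_commute: "v \<in> V \<Longrightarrow> w \<in> V \<Longrightarrow> dot v w = dot w v"
  unfolding dot_def by (auto intro!: add.finprod_cong' simp: vecs_carrier m_comm)

lemma linear_functional_dot_right:
  assumes x: "x \<in> V"
  shows "linear_functional V (dot x)"
  unfolding linear_functional_def
proof (intro conjI ballI)
  fix v w assume v: "v \<in> V" and w: "w \<in> V"
  have "dot x (vadd K v w) = (\<Oplus>j\<in>{..<n}. x j \<otimes> v j \<oplus> x j \<otimes> w j)"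
    unfolding dot_def using x v w by (intro add.finprod_cong') (auto simp: vadd_apply vecs_carrier r_distr)
  also have "\<dots> = dot x v \<oplus> dot x w"
    unfolding dot_def using x v w by (intro finsum_addf) (auto simp: vecs_carrier)
  finally show "dot x (vadd K v w) = dot x v \<oplus> dot x w" .
next
  fix c v assume c: "c \<in> carrier K" and v: "v \<in> V"
  have "dot x (vsmult K c v) = (\<Oplus>j\<in>{..<n}. c \<otimes> (x j \<otimes> v j))"
    unfolding dot_def using x v c by (intro add.finprod_cong') (auto simp: vsmult_apply vecs_carrier m_lcomm)
  also have "\<dots> = c \<otimes> dot x v"
    unfolding dot_def using x v c by (intro finsum_rdistr[symmetric]) (auto simp: vecs_carrier)
  finally show "dot x (vsmult K c v) = c \<otimes> dot x v" .
qed (use x in simp)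

lemma linear_functional_dot_left:
  assumes X: "X \<subseteq> V" and w: "w \<in> V"
  shows "linear_functional X (\<lambda>x. dot x w)"
proof -
  have "dot x w = dot w x" if "x \<in> V" for x
    using that w by (rule dot_commute)
  then show ?thesis
    using linear_functional_dot_right[OF w] X unfolding linear_functional_def
    by (simp add: subset_iff)
qed

lemma dot_vzero_left [simp]: "w \<in> V \<Longrightarrow> dot (vzero K) w = \<zero>"
  unfolding dot_def vzero_apply by (auto intro!: add.finprod_one_eqI simp: vecs_carrier)

definition unit_vec :: "nat \<Rightarrow> nat \<Rightarrow> 'a" where
  "unit_vec j = (\<lambda>k. if k = j then \<one> else \<zero>)"

lemma unit_vec_in_vecs: "j < n \<Longrightarrow> unit_vec j \<in> V"
  unfolding unit_vec_def by (intro vecsI) auto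

lemma dot_unit_vec: "j < n \<Longrightarrow> x \<in> V \<Longrightarrow> dot x (unit_vec j) = x j"
proof -
  assume j: "j < n" and x: "x \<in> V"
  have "dot x (unit_vec j) = (\<Oplus>k\<in>{..<n}. if j = k then x k else \<zero>)"
    unfolding dot_def unit_vec_def using x by (intro add.finprod_cong') (auto simp: vecs_carrier)
  also have "\<dots> = x j"
    using j x by (intro add.finprod_singleton) (auto simp: vecs_carrier)
  finally show ?thesis .
qed

lemma vecs_nonzero_coord:
  assumes "x \<in> V" "x \<noteq> vzero K"
  obtains j where "j < n" "x j \<noteq> \<zero>"
proof -
  have "\<not> (\<forall>j<n. x j = \<zero>)"
  proof
    assume "\<forall>j<n. x j = \<zero>"
    then have "x = vzero K"
      using vecs_beyond[OF assms(1)] by (intro ext) (metis vzero_apply not_less)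
    with assms(2) show False ..
  qed
  with that show thesis
    by blast
qed

lemma subspace_perp:
  assumes X: "X \<subseteq> V"
  shows "subspace K n (perp K n X)"
proof -
  have lin: "linear_functional V (dot x)" if "x \<in> X" for x
    using X that by (intro linear_functional_dot_right) auto
  have "dot x (vzero K) = \<zero>" if "x \<in> X" for x
    using X that dot_commute[of x "vzero K"] by auto
  moreover have "dot x (vadd K v w) = \<zero>" if "x \<in> X" "v \<in> perp K n X" "w \<in> perp K n X" for x v w
    using lin[OF that(1)] that by (auto simp: linear_functional_def perp_eq)
  moreover have "dot x (vsmult K c v) = \<zero>" if "x \<in> X" "c \<in> carrier K" "v \<in> perp K n X" for x c v
    using lin[OF that(1)] that by (auto simp: linear_functional_def perp_eq)
  ultimately show ?thesis
    unfolding subspace_def by (auto simp: perp_eq)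
qed

lemma perp_antimono: "X \<subseteq> Y \<Longrightarrow> perp K n Y \<subseteq> perp K n X"
  by (auto simp: perp_eq)

lemma card_dot_zero_left:
  assumes x: "x \<in> V"
  shows "q * card {w\<in>V. dot x w = \<zero>} = (if x = vzero K then q * q ^ n else q ^ n)"
proof (cases "x = vzero K")
  case True
  then have "{w\<in>V. dot x w = \<zero>} = V"
    by auto
  with True show ?thesis
    by (simp add: card_vecs)
next
  case False
  then obtain j where j: "j < n" "x j \<noteq> \<zero>"
    using vecs_nonzero_coord[OF x] by blast
  then have "card V = q * card {w\<in>V. dot x w = \<zero>}"
    by (intro card_linear_functional_kernel[OF subspace_vecs linear_functional_dot_right[OF x]
          unit_vec_in_vecs[OF j(1)]]) (simp add: dot_unit_vec x)
  with False show ?thesis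
    by (simp add: card_vecs)
qed

lemma card_dot_zero_right:
  assumes X: "subspace K n X" and w: "w \<in> V"
  shows "q * card {x\<in>X. dot x w = \<zero>} = (if w \<in> perp K n X then q * card X else card X)"
proof (cases "w \<in> perp K n X")
  case True
  then have "{x\<in>X. dot x w = \<zero>} = X"
    by (auto simp: perp_eq)
  with True show ?thesis
    by simp
next
  case False
  then obtain x0 where "x0 \<in> X" "dot x0 w \<noteq> \<zero>"
    using w by (auto simp: perp_eq)
  then have "card X = q * card {x\<in>X. dot x w = \<zero>}"
    using linear_functional_dot_left[OF subspace_subset_vecs[OF X] w]
    by (intro card_linear_functional_kernel[OF X])
  with False show ?thesis
    by simp
qed

lemma count_orthogonal_pairs:
  assumes X: "subspace K n X"
  shows "q * q ^ n + (card X - 1) * q ^ n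
    = (q ^ n - card (perp K n X)) * card X + card (perp K n X) * (q * card X)"
proof -
  let ?P = "perp K n X"
  have finX: "finite X" and X0: "vzero K \<in> X" and XV: "X \<subseteq> V" and PV: "?P \<subseteq> V"
    using X finite_subspace subspace_vzero subspace_subset_vecs by (auto simp: perp_eq)
  have "(\<Sum>x\<in>X. card {w\<in>V. dot x w = \<zero>}) = (\<Sum>w\<in>V. card {x\<in>X. dot x w = \<zero>})"
    using sum.swap_restrict[OF finX finite_vecs, of "\<lambda>_ _. 1::nat" "\<lambda>x w. dot x w = \<zero>"] by simp
  then have "(\<Sum>x\<in>X. q * card {w\<in>V. dot x w = \<zero>}) = (\<Sum>w\<in>V. q * card {x\<in>X. dot x w = \<zero>})"
    by (simp add: sum_distrib_left[symmetric])
  also have "(\<Sum>x\<in>X. q * card {w\<in>V. dot x w = \<zero>}) = q * q ^ n + card (X - {vzero K}) * q ^ n"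
    using XV finX X0 by (simp add: card_dot_zero_left subset_iff sum.remove)
  also have "(\<Sum>w\<in>V. q * card {x\<in>X. dot x w = \<zero>}) = card (V - ?P) * card X + card ?P * (q * card X)"
    using X PV by (simp add: card_dot_zero_right sum.subset_diff[OF PV finite_vecs])
  also have "card (V - ?P) = q ^ n - card ?P"
    using card_Diff_subset[OF finite_subset[OF PV finite_vecs] PV] by (simp add: card_vecs)
  finally show ?thesis
    using finX X0 by simp
qed

lemma card_perp:
  assumes X: "subspace K n X"
  shows "card (perp K n X) * card X = q ^ n"
proof -
  have "p * x = N"
    if "q * N + (x - 1) * N = (N - p) * x + p * (q * x)" "1 \<le> x" "p \<le> N" for N x p :: nat
  proof -
    have "int q * int N + (int x - 1) * int N = (int N - int p) * int x + int p * (int q * int x)"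
      using that by (metis (no_types) of_nat_add of_nat_diff of_nat_mult of_nat_1)
    then have "(int q - 1) * int N = (int q - 1) * (int p * int x)"
      by (simp add: algebra_simps)
    then show "p * x = N"
      using card_carrier_gt_1 by (simp flip: of_nat_mult)
  qed
  moreover have "1 \<le> card X"
    using finite_subspace[OF X] subspace_vzero[OF X] by (auto simp: Suc_le_eq card_gt_0_iff)
  moreover have "card (perp K n X) \<le> q ^ n"
    using card_mono[OF finite_vecs] subspace_subset_vecs[OF subspace_perp[OF subspace_subset_vecs[OF X]]]
    by (simp add: card_vecs)
  ultimately show ?thesis
    using count_orthogonal_pairs[OF X] by blast
qed

lemma vdim_perp: "subspace K n X \<Longrightarrow> vdim K (perp K n X) + vdim K X = n"
  using card_perp card_subspace subspace_perp[OF subspace_subset_vecs] card_carrier_gt_1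
  by (metis power_add power_inject_exp)

section \<open>Sums and intersections of subspaces\<close>

definition sumset :: "(nat \<Rightarrow> 'a) set \<Rightarrow> (nat \<Rightarrow> 'a) set \<Rightarrow> (nat \<Rightarrow> 'a) set" where
  "sumset X Y = {vadd K v w | v w. v \<in> X \<and> w \<in> Y}"

lemma sumset_subset:
  assumes "subspace K n Z" "X \<subseteq> Z" "Y \<subseteq> Z"
  shows "sumset X Y \<subseteq> Z"
  using assms by (auto simp: sumset_def intro: subspace_vadd)

lemma subset_sumset_left: "X \<subseteq> V \<Longrightarrow> subspace K n Y \<Longrightarrow> X \<subseteq> sumset X Y"
  unfolding sumset_def by (force dest: subspace_vzero)

lemma subset_sumset_right: "subspace K n X \<Longrightarrow> Y \<subseteq> V \<Longrightarrow> Y \<subseteq> sumset X Y"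
  unfolding sumset_def by (force dest: subspace_vzero)

lemma subspace_sumset:
  assumes X: "subspace K n X" and Y: "subspace K n Y"
  shows "subspace K n (sumset X Y)"
  unfolding subspace_def
proof (intro conjI ballI)
  have XV: "X \<subseteq> V" and YV: "Y \<subseteq> V"
    using X Y subspace_subset_vecs by auto
  then show "sumset X Y \<subseteq> V"
    using sumset_subset[OF subspace_vecs] by blast
  show "vzero K \<in> sumset X Y"
    using subset_sumset_left[OF XV Y] subspace_vzero[OF X] by blast
next
  fix s t assume "s \<in> sumset X Y" "t \<in> sumset X Y"
  then obtain a b c d where "a \<in> X" "b \<in> Y" "c \<in> X" "d \<in> Y" "s = vadd K a b" "t = vadd K c d"
    unfolding sumset_def by blast
  moreover from this have "vadd K s t = vadd K (vadd K a c) (vadd K b d)"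
    using X Y subspace_subset_vecs by (blast intro: vadd_vadd_swap)
  ultimately show "vadd K s t \<in> sumset X Y"
    using X Y unfolding sumset_def by (blast intro: subspace_vadd)
next
  fix c s assume c: "c \<in> carrier K" and "s \<in> sumset X Y"
  then obtain a b where "a \<in> X" "b \<in> Y" "s = vadd K a b"
    unfolding sumset_def by blast
  moreover from this have "vsmult K c s = vadd K (vsmult K c a) (vsmult K c b)"
    using X Y c subspace_subset_vecs by (blast intro: vsmult_vadd)
  ultimately show "vsmult K c s \<in> sumset X Y"
    using X Y c unfolding sumset_def by (blast intro: subspace_vsmult)
qed

lemma sumset_fiber:
  assumes X: "subspace K n X" and Y: "subspace K n Y" and v0: "v0 \<in> X" and w0: "w0 \<in> Y"
  shows "{p \<in> X \<times> Y. vadd K (fst p) (snd p) = vadd K v0 w0}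
    = (\<lambda>u. (vadd K v0 u, vadd K w0 (vneg u))) ` (X \<inter> Y)"
proof (intro equalityI subsetI)
  have XV: "X \<subseteq> V" and YV: "Y \<subseteq> V"
    using X Y subspace_subset_vecs by auto
  fix p assume "p \<in> {p \<in> X \<times> Y. vadd K (fst p) (snd p) = vadd K v0 w0}"
  then obtain v w where p: "p = (v, w)" and vw: "v \<in> X" "w \<in> Y" "vadd K v w = vadd K v0 w0"
    by auto
  have V4: "v \<in> V" "w \<in> V" "v0 \<in> V" "w0 \<in> V"
    using vw(1,2) v0 w0 XV YV by auto
  define u where "u = vadd K (vneg v0) v"
  have u_alt: "u = vadd K w0 (vneg w)"
    unfolding u_def using vadd_eq_vadd_imp_vneg_vadd[OF V4 vw(3)] .
  have "u \<in> X"
    using X v0 vw by (simp add: u_def subspace_vadd subspace_vneg)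
  moreover have "u \<in> Y"
    using Y w0 vw by (simp add: u_alt subspace_vadd subspace_vneg)
  moreover have "vadd K v0 u = v"
    using V4 by (simp add: u_def)
  moreover have "vadd K w0 (vneg u) = w"
    using V4 vadd_vneg_vadd_vneg by (simp add: u_alt)
  ultimately show "p \<in> (\<lambda>u. (vadd K v0 u, vadd K w0 (vneg u))) ` (X \<inter> Y)"
    using p by blast
next
  fix p assume "p \<in> (\<lambda>u. (vadd K v0 u, vadd K w0 (vneg u))) ` (X \<inter> Y)"
  then obtain u where u: "u \<in> X" "u \<in> Y" and p: "p = (vadd K v0 u, vadd K w0 (vneg u))"
    by blast
  have "vadd K (vadd K v0 u) (vadd K w0 (vneg u)) = vadd K v0 w0"
    using u v0 w0 X Y subspace_subset_vecs by (blast intro: vadd_vneg_shift)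
  then show "p \<in> {p \<in> X \<times> Y. vadd K (fst p) (snd p) = vadd K v0 w0}"
    using u v0 w0 X Y p by (simp add: subspace_vadd subspace_vneg)
qed

lemma card_sumset_Int:
  assumes X: "subspace K n X" and Y: "subspace K n Y"
  shows "card (sumset X Y) * card (X \<inter> Y) = card X * card Y"
proof -
  let ?add = "\<lambda>p. vadd K (fst p) (snd p)"
  have "?add ` (X \<times> Y) = sumset X Y"
    unfolding sumset_def by force
  moreover have "card {p \<in> X \<times> Y. ?add p = s} = card (X \<inter> Y)" if s: "s \<in> sumset X Y" for s
  proof -
    obtain v0 w0 where v0: "v0 \<in> X" and w0: "w0 \<in> Y" and s: "s = vadd K v0 w0"
      using s unfolding sumset_def by blast
    have "inj_on (\<lambda>u. (vadd K v0 u, vadd K w0 (vneg u))) (X \<inter> Y)"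
      using v0 subspace_subset_vecs[OF X] by (intro inj_onI) (auto dest: vadd_left_cancel)
    then show ?thesis
      using sumset_fiber[OF X Y v0 w0] s by (simp add: card_image)
  qed
  ultimately have "card (X \<times> Y) = card (sumset X Y) * card (X \<inter> Y)"
    using X Y finite_subspace by (intro card_eq_mult_if_fibers_card) auto
  then show ?thesis
    by (simp add: card_cartesian_product)
qed

lemma vdim_sumset_Int:
  assumes X: "subspace K n X" and Y: "subspace K n Y"
  shows "vdim K (sumset X Y) + vdim K (X \<inter> Y) = vdim K X + vdim K Y"
  using card_sumset_Int[OF X Y] card_subspace[OF subspace_sumset[OF X Y]]
    card_subspace[OF subspace_Int[OF X Y]] card_subspace[OF X] card_subspace[OF Y] card_carrier_gt_1
  by (metis power_add power_inject_exp)

lemma perp_sumset: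
  assumes X: "subspace K n X" and Y: "subspace K n Y"
  shows "perp K n (sumset X Y) = perp K n X \<inter> perp K n Y"
proof
  have XV: "X \<subseteq> V" and YV: "Y \<subseteq> V"
    using X Y subspace_subset_vecs by auto
  show "perp K n (sumset X Y) \<subseteq> perp K n X \<inter> perp K n Y"
    using perp_antimono subset_sumset_left[OF XV Y] subset_sumset_right[OF X YV] by blast
  show "perp K n X \<inter> perp K n Y \<subseteq> perp K n (sumset X Y)"
  proof
    fix x assume x: "x \<in> perp K n X \<inter> perp K n Y"
    then have "x \<in> V"
      by (auto simp: perp_eq)
    have "dot (vadd K v w) x = \<zero>" if "v \<in> X" "w \<in> Y" for v w
      using linear_functional_vadd[OF linear_functional_dot_left[OF _ \<open>x \<in> V\<close>], of V v w]
        that x XV YV by (auto simp: perp_eq)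
    with \<open>x \<in> V\<close> show "x \<in> perp K n (sumset X Y)"
      by (auto simp: perp_eq sumset_def)
  qed
qed

lemma perp_Int:
  assumes X: "subspace K n X" and Y: "subspace K n Y"
  shows "perp K n (X \<inter> Y) = sumset (perp K n X) (perp K n Y)"
proof (rule sym, rule subspace_eq_if_vdim_eq)
  have XV: "X \<subseteq> V" and YV: "Y \<subseteq> V"
    using X Y subspace_subset_vecs by auto
  have PX: "subspace K n (perp K n X)" and PY: "subspace K n (perp K n Y)"
    using subspace_perp XV YV by auto
  show PXY: "subspace K n (perp K n (X \<inter> Y))"
    using XV by (intro subspace_perp) auto
  show "subspace K n (sumset (perp K n X) (perp K n Y))"
    using subspace_sumset[OF PX PY] .
  show "sumset (perp K n X) (perp K n Y) \<subseteq> perp K n (X \<inter> Y)"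
    using PXY perp_antimono[of "X \<inter> Y" X] perp_antimono[of "X \<inter> Y" Y] by (intro sumset_subset) auto
  have "vdim K (perp K n X \<inter> perp K n Y) + vdim K (sumset X Y) = n"
    using vdim_perp[OF subspace_sumset[OF X Y]] perp_sumset[OF X Y] by simp
  then show "vdim K (sumset (perp K n X) (perp K n Y)) = vdim K (perp K n (X \<inter> Y))"
    using vdim_sumset_Int[OF PX PY] vdim_sumset_Int[OF X Y]
      vdim_perp[OF X] vdim_perp[OF Y] vdim_perp[OF subspace_Int[OF X Y]]
    by linarith
qed

lemma span_singleton:
  assumes a: "a \<in> V"
  shows "span K {a} = (\<lambda>c. vsmult K c a) ` carrier K"
proof -
  have "lincomb K c {a} = vsmult K (c a) a" if "c \<in> {a} \<rightarrow> carrier K" for c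
    using lincomb_insert[of "{}" a c] a that by simp
  then show ?thesis
    unfolding span_def by (force intro: exI[of _ "\<lambda>_. _"])
qed

lemma vdim_span_singleton:
  assumes a: "a \<in> V" "a \<noteq> vzero K"
  shows "vdim K (span K {a}) = 1"
proof -
  obtain j where j: "j < n" "a j \<noteq> \<zero>"
    using vecs_nonzero_coord[OF a] .
  have "inj_on (\<lambda>c. vsmult K c a) (carrier K)"
  proof (rule inj_onI)
    fix c d assume cd: "c \<in> carrier K" "d \<in> carrier K" and eq: "vsmult K c a = vsmult K d a"
    have "c \<otimes> a j = d \<otimes> a j"
      using fun_cong[OF eq, of j] by (simp add: vsmult_apply)
    then show "c = d"
      using m_rcancel[OF j(2) vecs_carrier[OF a(1)] cd] by simp
  qed
  then have "card (span K {a}) = q ^ 1"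
    using span_singleton[OF a(1)] by (simp add: card_image)
  then show ?thesis
    using a(1) by (intro vdim_eqI subspace_span) auto
qed

lemma Int_span_singleton:
  assumes X: "subspace K n X" and a: "a \<in> V" "a \<notin> X"
  shows "X \<inter> span K {a} = {vzero K}"
proof
  show "{vzero K} \<subseteq> X \<inter> span K {a}"
    using subspace_vzero[OF X] subspace_vzero[OF subspace_span[of "{a}"]] a(1) by auto
  show "X \<inter> span K {a} \<subseteq> {vzero K}"
  proof
    fix x assume x: "x \<in> X \<inter> span K {a}"
    then obtain c where c: "c \<in> carrier K" "x = vsmult K c a"
      using span_singleton[OF a(1)] by auto
    have "c = \<zero>"
    proof (rule ccontr)
      assume "c \<noteq> \<zero>"
      then have "vsmult K (inv c) x = a"
        using c a(1) field_Units by (intro ext) (simp add: vsmult_apply vecs_carrier m_assoc[symmetric])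
      moreover have "vsmult K (inv c) x \<in> X"
        using x c \<open>c \<noteq> \<zero>\<close> field_Units X by (simp add: subspace_vsmult)
      ultimately show False
        using a(2) by simp
    qed
    then show "x \<in> {vzero K}"
      using c a(1) by simp
  qed
qed

end

section \<open>Rank functions on the product lattice\<close>

lemma
  assumes "rank_function l K n \<rho>"
  shows rank_function_nonneg: "L \<in> PL l K n \<Longrightarrow> 0 \<le> \<rho> L"
    and rank_function_le_Rk: "L \<in> PL l K n \<Longrightarrow> \<rho> L \<le> Rk l K L"
    and rank_function_mono: "L \<in> PL l K n \<Longrightarrow> L' \<in> PL l K n \<Longrightarrow> Pincl l L L' \<Longrightarrow> \<rho> L \<le> \<rho> L'"
    and rank_function_submodular: "L \<in> PL l K n \<Longrightarrow> L' \<in> PL l K n \<Longrightarrow>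
      \<rho> (Psum l K L L') + \<rho> (Pinter L L') \<le> \<rho> L + \<rho> L'"
  using assms by (auto simp: rank_function_def)

locale finite_field_family =
  fixes l :: nat and K :: "nat \<Rightarrow> ('a, 'b) ring_scheme" and n :: "nat \<Rightarrow> nat"
  assumes finite_fields: "\<forall>i<l. field (K i) \<and> finite (carrier (K i))"
begin

lemma component_space: "i < l \<Longrightarrow> finite_field_space (K i)"
  using finite_fields by (simp add: finite_field_space_def finite_field_space_axioms_def)

lemma PL_subspace: "L \<in> PL l K n \<Longrightarrow> i < l \<Longrightarrow> subspace (K i) (n i) (L i)"
  by (simp add: PL_def)

lemma PL_beyond: "L \<in> PL l K n \<Longrightarrow> l \<le> i \<Longrightarrow> L i = {}"
  by (simp add: PL_def)

lemma PLI: "(\<And>i. i < l \<Longrightarrow> subspace (K i) (n i) (L i)) \<Longrightarrow> (\<And>i. l \<le> i \<Longrightarrow> L i = {}) \<Longrightarrow> L \<in> PL l K n"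
  by (simp add: PL_def)

lemma Psum_eq_sumset: "i < l \<Longrightarrow> Psum l K L L' i = finite_field_space.sumset (K i) (L i) (L' i)"
  using finite_field_space.sumset_def[OF component_space] by (simp add: Psum_def)

lemma Psum_in_PL: "L \<in> PL l K n \<Longrightarrow> L' \<in> PL l K n \<Longrightarrow> Psum l K L L' \<in> PL l K n"
proof (rule PLI)
  fix i assume L: "L \<in> PL l K n" "L' \<in> PL l K n" and i: "i < l"
  interpret finite_field_space "K i" "n i"
    using component_space[OF i] .
  show "subspace (K i) (n i) (Psum l K L L' i)"
    using subspace_sumset PL_subspace L i Psum_eq_sumset by simp
qed (simp add: Psum_def)

lemma Pinter_in_PL: "L \<in> PL l K n \<Longrightarrow> L' \<in> PL l K n \<Longrightarrow> Pinter L L' \<in> PL l K n"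
proof (rule PLI)
  fix i assume L: "L \<in> PL l K n" "L' \<in> PL l K n" and i: "i < l"
  interpret finite_field_space "K i" "n i"
    using component_space[OF i] .
  show "subspace (K i) (n i) (Pinter L L' i)"
    using subspace_Int PL_subspace L i by (simp add: Pinter_def)
qed (simp_all add: Pinter_def PL_beyond)

lemma Pperp_in_PL: "L \<in> PL l K n \<Longrightarrow> Pperp l K n L \<in> PL l K n"
proof (rule PLI)
  fix i assume L: "L \<in> PL l K n" and i: "i < l"
  interpret finite_field_space "K i" "n i"
    using component_space[OF i] .
  show "subspace (K i) (n i) (Pperp l K n L i)"
    using subspace_perp subspace_subset_vecs[OF PL_subspace[OF L i]] i by (simp add: Pperp_def)
qed (simp add: Pperp_def)

lemma Ptop_in_PL: "Ptop l K n \<in> PL l K n"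
proof (rule PLI)
  fix i assume i: "i < l"
  interpret finite_field_space "K i" "n i"
    using component_space[OF i] .
  show "subspace (K i) (n i) (Ptop l K n i)"
    using subspace_vecs i by (simp add: Ptop_def)
qed (simp add: Ptop_def)

lemma Rk_Psum_Pinter:
  assumes L: "L \<in> PL l K n" and L': "L' \<in> PL l K n"
  shows "Rk l K (Psum l K L L') + Rk l K (Pinter L L') = Rk l K L + Rk l K L'"
proof -
  have "int (vdim (K i) (Psum l K L L' i)) + int (vdim (K i) (Pinter L L' i))
     = int (vdim (K i) (L i)) + int (vdim (K i) (L' i))" if i: "i < l" for i
  proof -
    interpret finite_field_space "K i" "n i"
      using component_space[OF i] .
    show ?thesis
      using vdim_sumset_Int[OF PL_subspace[OF L i] PL_subspace[OF L' i]] Psum_eq_sumset[OF i]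
      by (simp add: Pinter_def)
  qed
  then show ?thesis
    unfolding Rk_def by (simp add: sum.distrib[symmetric])
qed

lemma Rk_Ptop: "Rk l K (Ptop l K n) = (\<Sum>i<l. int (n i))"
  unfolding Rk_def
proof (rule sum.cong)
  fix i assume "i \<in> {..<l}"
  then have i: "i < l"
    by simp
  interpret finite_field_space "K i" "n i"
    using component_space[OF i] .
  show "int (vdim (K i) (Ptop l K n i)) = int (n i)"
    using vdim_vecs i by (simp add: Ptop_def)
qed simp

lemma Rk_Pperp:
  assumes L: "L \<in> PL l K n"
  shows "Rk l K (Pperp l K n L) = Rk l K (Ptop l K n) - Rk l K L"
proof -
  have "int (vdim (K i) (Pperp l K n L i)) = int (n i) - int (vdim (K i) (L i))" if i: "i < l" for i
  proof -
    interpret finite_field_space "K i" "n i"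
      using component_space[OF i] .
    show ?thesis
      using vdim_perp[OF PL_subspace[OF L i]] i by (simp add: Pperp_def)
  qed
  then show ?thesis
    unfolding Rk_Ptop unfolding Rk_def by (simp add: sum_subtractf[symmetric])
qed

lemma Rk_mono:
  assumes B: "B \<in> PL l K n" and A: "A \<in> PL l K n" and BA: "Pincl l B A"
  shows "Rk l K B \<le> Rk l K A"
  unfolding Rk_def
proof (rule sum_mono)
  fix i assume "i \<in> {..<l}"
  then have i: "i < l"
    by simp
  interpret finite_field_space "K i" "n i"
    using component_space[OF i] .
  show "int (vdim (K i) (B i)) \<le> int (vdim (K i) (A i))"
    using vdim_mono[OF PL_subspace[OF B i] PL_subspace[OF A i]] BA i by (simp add: Pincl_def)
qed

lemma Pperp_Psum:
  assumes L: "L \<in> PL l K n" and L': "L' \<in> PL l K n"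
  shows "Pperp l K n (Psum l K L L') = Pinter (Pperp l K n L) (Pperp l K n L')"
proof (rule ext)
  fix i
  show "Pperp l K n (Psum l K L L') i = Pinter (Pperp l K n L) (Pperp l K n L') i"
  proof (cases "i < l")
    case True
    interpret finite_field_space "K i" "n i"
      using component_space[OF True] .
    show ?thesis
      using perp_sumset[OF PL_subspace[OF L True] PL_subspace[OF L' True]] Psum_eq_sumset[OF True] True
      by (simp add: Pperp_def Pinter_def)
  qed (simp add: Pperp_def Pinter_def)
qed

lemma Pperp_Pinter:
  assumes L: "L \<in> PL l K n" and L': "L' \<in> PL l K n"
  shows "Pperp l K n (Pinter L L') = Psum l K (Pperp l K n L) (Pperp l K n L')"
proof (rule ext)
  fix i
  show "Pperp l K n (Pinter L L') i = Psum l K (Pperp l K n L) (Pperp l K n L') i"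
  proof (cases "i < l")
    case True
    interpret finite_field_space "K i" "n i"
      using component_space[OF True] .
    show ?thesis
      using perp_Int[OF PL_subspace[OF L True] PL_subspace[OF L' True]] Psum_eq_sumset[OF True] True
      by (simp add: Pperp_def Pinter_def)
  qed (simp add: Pperp_def Psum_def)
qed

lemma Pperp_antimono: "Pincl l L L' \<Longrightarrow> Pincl l (Pperp l K n L') (Pperp l K n L)"
  by (auto simp: Pincl_def Pperp_def perp_def)

lemma Pperp_le_Ptop: "Pincl l (Pperp l K n L) (Ptop l K n)"
  by (auto simp: Pincl_def Pperp_def Ptop_def perp_def)

definition Pline :: "nat \<Rightarrow> (nat \<Rightarrow> 'a) \<Rightarrow> nat \<Rightarrow> (nat \<Rightarrow> 'a) set" where
  "Pline i a = (\<lambda>j. if j = i then span (K i) {a} else if j < l then {vzero (K j)} else {})"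

context
  fixes i a
  assumes i: "i < l" and a: "a \<in> vecs (K i) (n i)" "a \<noteq> vzero (K i)"
begin

interpretation finite_field_space "K i" "n i"
  using component_space[OF i] .

lemma Pline_in_PL: "Pline i a \<in> PL l K n"
proof (rule PLI)
  fix j assume j: "j < l"
  interpret J: finite_field_space "K j" "n j"
    using component_space[OF j] .
  show "subspace (K j) (n j) (Pline i a j)"
    using subspace_span[of "{a}"] a J.subspace_vzero_only j by (simp add: Pline_def)
qed (use i in \<open>simp add: Pline_def\<close>)

lemma Rk_Pline: "Rk l K (Pline i a) = 1"
proof -
  have "Rk l K (Pline i a) = (\<Sum>j<l. if j = i then 1 else 0)"
    unfolding Rk_def
  proof (rule sum.cong)
    fix j assume "j \<in> {..<l}"
    then have j: "j < l"
      by simp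
    interpret J: finite_field_space "K j" "n j"
      using component_space[OF j] .
    show "int (vdim (K j) (Pline i a j)) = (if j = i then 1 else 0)"
      using vdim_span_singleton[OF a] J.vdim_vzero_only j by (simp add: Pline_def)
  qed simp
  also have "\<dots> = 1"
    using i by simp
  finally show ?thesis .
qed

lemma Rk_Pinter_Pline:
  assumes B: "B \<in> PL l K n" and aB: "a \<notin> B i"
  shows "Rk l K (Pinter B (Pline i a)) = 0"
  unfolding Rk_def
proof (rule sum.neutral, rule ballI)
  fix j assume "j \<in> {..<l}"
  then have j: "j < l"
    by simp
  interpret J: finite_field_space "K j" "n j"
    using component_space[OF j] .
  have "Pinter B (Pline i a) j = {vzero (K j)}"
    using Int_span_singleton[OF PL_subspace[OF B i] a(1) aB] J.subspace_vzero[OF PL_subspace[OF B j]]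
    by (auto simp: Pinter_def Pline_def j)
  then show "int (vdim (K j) (Pinter B (Pline i a) j)) = 0"
    using J.vdim_vzero_only by simp
qed

lemma Psum_Pline_le:
  assumes B: "B \<in> PL l K n" and A: "A \<in> PL l K n" and BA: "Pincl l B A" and aA: "a \<in> A i"
  shows "Pincl l (Psum l K B (Pline i a)) A"
  unfolding Pincl_def
proof (intro allI impI)
  fix j assume j: "j < l"
  interpret J: finite_field_space "K j" "n j"
    using component_space[OF j] .
  have "Pline i a j \<subseteq> A j"
    using span_subset[OF PL_subspace[OF A i]] aA J.subspace_vzero[OF PL_subspace[OF A j]]
    by (auto simp: Pline_def j)
  then show "Psum l K B (Pline i a) j \<subseteq> A j"
    using J.sumset_subset[OF PL_subspace[OF A j]] BA j by (simp add: Psum_eq_sumset Pincl_def)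
qed

end

lemma rank_function_cover:
  assumes \<rho>: "rank_function l K n \<rho>"
    and B: "B \<in> PL l K n" and A: "A \<in> PL l K n" and BA: "Pincl l B A" and ne: "A \<noteq> B"
  obtains C where "C \<in> PL l K n" "Pincl l C A" "Rk l K C = Rk l K B + 1" "\<rho> C \<le> \<rho> B + 1"
proof -
  obtain i where i: "i < l" "B i \<noteq> A i"
    using ne PL_beyond[OF A] PL_beyond[OF B] by (metis ext not_le)
  interpret finite_field_space "K i" "n i"
    using component_space[OF i(1)] .
  obtain a where a: "a \<in> A i" "a \<notin> B i"
    using i BA by (auto simp: Pincl_def)
  have a_vec: "a \<in> vecs (K i) (n i)" "a \<noteq> vzero (K i)"
    using a subspace_subset_vecs[OF PL_subspace[OF A i(1)]] subspace_vzero[OF PL_subspace[OF B i(1)]]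
    by auto
  let ?E = "Pline i a"
  have E: "?E \<in> PL l K n"
    using Pline_in_PL[OF i(1) a_vec] .
  have "Rk l K (Psum l K B ?E) = Rk l K B + 1"
    using Rk_Psum_Pinter[OF B E] Rk_Pline[OF i(1) a_vec] Rk_Pinter_Pline[OF i(1) a_vec B a(2)] by simp
  moreover have "\<rho> (Psum l K B ?E) \<le> \<rho> B + 1"
    using rank_function_submodular[OF \<rho> B E] rank_function_nonneg[OF \<rho> Pinter_in_PL[OF B E]]
      rank_function_le_Rk[OF \<rho> E] Rk_Pline[OF i(1) a_vec] by linarith
  ultimately show thesis
    using that Psum_in_PL[OF B E] Psum_Pline_le[OF i(1) a_vec B A BA a(1)] by blast
qed

lemma rank_function_le_Rk_diff:
  assumes \<rho>: "rank_function l K n \<rho>" and B: "B \<in> PL l K n" and A: "A \<in> PL l K n" and BA: "Pincl l B A"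
  shows "\<rho> A \<le> \<rho> B + Rk l K A - Rk l K B"
  using B BA
proof (induction "nat (Rk l K A - Rk l K B)" arbitrary: B rule: less_induct)
  case less
  show ?case
  proof (cases "A = B")
    case False
    then obtain C where C: "C \<in> PL l K n" "Pincl l C A" "Rk l K C = Rk l K B + 1" "\<rho> C \<le> \<rho> B + 1"
      using rank_function_cover[OF \<rho> less.prems(1) A less.prems(2)] by blast
    moreover have "Rk l K C \<le> Rk l K A"
      using Rk_mono[OF C(1) A C(2)] .
    ultimately have "\<rho> A \<le> \<rho> C + Rk l K A - Rk l K C"
      by (intro less.hyps) auto
    with C show ?thesis
      by simp
  qed simp
qed

theorem dual_rank_function:
  assumes \<rho>: "rank_function l K n \<rho>"
  shows "rank_function l K n (dual_rank l K n \<rho>)"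
  unfolding rank_function_def
proof (intro conjI ballI impI)
  fix L assume L: "L \<in> PL l K n"
  show "0 \<le> dual_rank l K n \<rho> L"
    using rank_function_le_Rk_diff[OF \<rho> Pperp_in_PL[OF L] Ptop_in_PL Pperp_le_Ptop] Rk_Pperp[OF L]
    by (simp add: dual_rank_def)
  show "dual_rank l K n \<rho> L \<le> Rk l K L"
    using rank_function_mono[OF \<rho> Pperp_in_PL[OF L] Ptop_in_PL Pperp_le_Ptop]
    by (simp add: dual_rank_def)
next
  fix L L' assume L: "L \<in> PL l K n" and L': "L' \<in> PL l K n" and LL': "Pincl l L L'"
  show "dual_rank l K n \<rho> L \<le> dual_rank l K n \<rho> L'"
    using rank_function_le_Rk_diff[OF \<rho> Pperp_in_PL[OF L'] Pperp_in_PL[OF L] Pperp_antimono[OF LL']]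
      Rk_Pperp[OF L] Rk_Pperp[OF L']
    by (simp add: dual_rank_def)
next
  fix L L' assume L: "L \<in> PL l K n" and L': "L' \<in> PL l K n"
  show "dual_rank l K n \<rho> (Psum l K L L') + dual_rank l K n \<rho> (Pinter L L')
      \<le> dual_rank l K n \<rho> L + dual_rank l K n \<rho> L'"
    using rank_function_submodular[OF \<rho> Pperp_in_PL[OF L] Pperp_in_PL[OF L']]
      Rk_Psum_Pinter[OF L L'] Pperp_Psum[OF L L'] Pperp_Pinter[OF L L']
    by (simp add: dual_rank_def)
qed

end

theorem mainTheorem2:
  fixes l :: nat and n :: "nat \<Rightarrow> nat" and K :: "nat \<Rightarrow> ('a, 'b) ring_scheme"
    and \<rho> :: "(nat \<Rightarrow> (nat \<Rightarrow> 'a) set) \<Rightarrow> int"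
  assumes "0 < l"
    and "\<forall>i<l. 0 < n i"
    and "\<forall>i<l. field (K i) \<and> finite (carrier (K i))"
    and "rank_function l K n \<rho>"
  shows "rank_function l K n (dual_rank l K n \<rho>)"
proof -
  interpret finite_field_family l K n
    using assms(3) by unfold_locales
  show ?thesis
    using dual_rank_function[OF assms(4)] .
qed

end
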